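(* Let $\kappa$ be a regular infinite cardinal and let $\langle W^\kappa,(T_i)_{i\in\{a,b\}},\theta\rangle$ be the $*$-type space described in the context. For $i\in\{a,b\}$, $j$ the other player, and $\overline B_i^1(E)=\{w\in W^\kappa:T_i(w)(E)\ge1\}$: $[X_i^\kappa(0)=1]=\overline B_i^1([X_0^\kappa=h])\cup\overline B_i^1([X_0^\kappa=t])$; for all $\beta<\kappa$, $[X_i^\kappa(\beta+1)=1]=\overline B_i^1([X_j^\kappa(\beta)=1])\cup\overline B_i^1([X_j^\kappa(\beta)=0])$; for all limit $\lambda<\kappa$, $[X_i^\kappa(\lambda)=1]=\overline B_i^1([\lambda\text{-par}(X_j^\kappa)=\text{even}])\cup\overline B_i^1([\lambda\text{-par}(X_j^\kappa)=\text{odd}])$.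
   Context: Records: for $\alpha\ge1$, a record of length $\alpha$ is $r\in\{0,1\}^\alpha$ such that for every limit $\lambda\le\alpha$ there is $\gamma<\lambda$ with $r(\beta)=0$ for $\gamma\le\beta<\lambda$. Parity: finite ordinals usual (0 even); infinite $\hat\lambda+n$ ($\hat\lambda$ limit) has the parity of $n$. For limit $\lambda\le\alpha$, $o^\lambda(r)$ is the least ordinal $<\lambda$ after which $r$ is $0$ below $\lambda$; $\lambda\text{-par}(r)$ is its parity. $W^0=\{h,t\}$; $W^\alpha$ ($\alpha\ge1$) = triples $(w_0,w_a^\alpha,w_b^\alpha)$, $w_0\in\{h,t\}$, $w_a^\alpha,w_b^\alpha$ records of length $\alpha$; $w^\alpha\upharpoonright\beta$ restricts both records (and $w^\alpha\upharpoonright0=w_0$); $\pi_{\beta,\alpha}(w^\alpha)=w^\alpha\upharpoonright\beta$. $P_i(w^\alpha)$: set of $v^\alpha$ with $v_i^\alpha=w_i^\alpha$; $w_i^\alpha(0)=1\Rightarrow v_0=w_0$; $w_i^\alpha(\beta+1)=1\Rightarrow v_j^\alpha(\beta)=w_j^\alpha(\beta)$ ($\beta+1<\alpha$); $w_i^\alpha(\lambda)=1\Rightarrow\lambda\text{-par}(v_j^\alpha)=\lambda\text{-par}(w_j^\alpha)$ (limit $\lambda<\alpha$). $T_a,T_b$ map $W^\kappa$ into finitely additive probability measures on $\mathrm{Pow}(W^\kappa)$ and satisfy for all $w^\kappa$: (a) $T_i$ constant on $P_i(w^\kappa)$; (b) $T_i(w^\kappa)(P_i(w^\kappa))=1$;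 (c) $T_i(w^\kappa)([X_0^\kappa=w_0])=1$ if $w_i^\kappa(0)=1$, $\frac12$ otherwise; (d) for $\beta<\kappa$, $T_i(w^\kappa)([X_j^\kappa(\beta)=w_j^\kappa(\beta)])=1$ if $w_i^\kappa(\beta+1)=1$, $\frac12$ otherwise; (e) for limit $\lambda<\kappa$, $T_i(w^\kappa)([\lambda\text{-par}(X_j^\kappa)=\lambda\text{-par}(w_j^\kappa)])=1$ if $w_i^\kappa(\lambda)=1$, $\frac12$ otherwise; (f) for $\beta<\alpha<\kappa$, $E^\beta\subseteq W^\beta$, $u^\kappa\upharpoonright\alpha=w^\kappa\upharpoonright\alpha$ implies equal $T_i$-values on $\pi_{\beta,\kappa}^{-1}(E^\beta)$. $\theta(w^\kappa)=w_0$. Notation: $[X_0^\kappa=c]=\{u:u_0=c\}$, $[X_i^\kappa(\beta)=c]=\{u:u_i^\kappa(\beta)=c\}$, $[\lambda\text{-par}(X_i^\kappa)=e]=\{u:\lambda\text{-par}(u_i^\kappa)=e\}$. *)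

theory Defs
  imports Complex_Main
begin

(* Ordinals below kappa are modelled by the elements of a well-ordered type 'o;
   kappa itself is the order type of 'o (see ord_rel below). *)

definition ord_rel :: "('o::wellorder) rel" where
  "ord_rel = {(x, y). x \<le> y}"

definition ozero :: "'o::wellorder" where
  "ozero = (LEAST x. True)"

definition osucc :: "'o::wellorder \<Rightarrow> 'o" where
  "osucc x = (LEAST y. x < y)"

definition is_limit :: "'o::wellorder \<Rightarrow> bool" where
  "is_limit x \<longleftrightarrow> x \<noteq> ozero \<and> \<not> (\<exists>y. x = osucc y)"

inductive ord_even :: "'o::wellorder \<Rightarrow> bool" where
  ev_zero: "ord_even ozero"
| ev_limit: "is_limit x \<Longrightarrow> ord_even x"
| ev_step: "ord_even x \<Longrightarrow> ord_even (osucc (osucc x))"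

datatype coin = H | T
datatype player = Pa | Pb

fun other :: "player \<Rightarrow> player" where
  "other Pa = Pb" | "other Pb = Pa"

(* a world (w_0, w_a, w_b); records are 'o \<Rightarrow> bool, True meaning 1, False meaning 0 *)
type_synonym 'o world = "coin \<times> ('o \<Rightarrow> bool) \<times> ('o \<Rightarrow> bool)"

definition coin_of :: "'o world \<Rightarrow> coin" where
  "coin_of w = fst w"

fun recd :: "player \<Rightarrow> 'o world \<Rightarrow> ('o \<Rightarrow> bool)" where
  "recd Pa w = fst (snd w)" | "recd Pb w = snd (snd w)"

(* record of length beta < kappa, represented by padding with 0 from beta on *)
definition is_record_upto :: "'o::wellorder \<Rightarrow> ('o \<Rightarrow> bool) \<Rightarrow> bool" where
  "is_record_upto \<beta> r \<longleftrightarrow> (\<forall>\<delta>. \<beta> \<le> \<delta> \<longrightarrow> \<not> r \<delta>) \<and>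
     (\<forall>lm. is_limit lm \<and> lm \<le> \<beta> \<longrightarrow> (\<exists>\<gamma><lm. \<forall>\<delta>. \<gamma> \<le> \<delta> \<and> \<delta> < lm \<longrightarrow> \<not> r \<delta>))"

(* record of length kappa: conditions for limits lambda < kappa and for lambda = kappa *)
definition is_record_full :: "('o::wellorder \<Rightarrow> bool) \<Rightarrow> bool" where
  "is_record_full r \<longleftrightarrow>
     (\<forall>lm. is_limit lm \<longrightarrow> (\<exists>\<gamma><lm. \<forall>\<delta>. \<gamma> \<le> \<delta> \<and> \<delta> < lm \<longrightarrow> \<not> r \<delta>)) \<and>
     (\<exists>\<gamma>. \<forall>\<delta>. \<gamma> \<le> \<delta> \<longrightarrow> \<not> r \<delta>)"

definition W_kappa :: "('o::wellorder) world set" where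
  "W_kappa = {(c, ra, rb). is_record_full ra \<and> is_record_full rb}"

(* W^beta for beta < kappa (for beta = 0 this is a copy of {h,t}) *)
definition W_upto :: "'o::wellorder \<Rightarrow> 'o world set" where
  "W_upto \<beta> = {(c, ra, rb). is_record_upto \<beta> ra \<and> is_record_upto \<beta> rb}"

definition restr :: "'o::wellorder \<Rightarrow> 'o world \<Rightarrow> 'o world" where
  "restr \<beta> w = (fst w, \<lambda>\<delta>. \<delta> < \<beta> \<and> fst (snd w) \<delta>, \<lambda>\<delta>. \<delta> < \<beta> \<and> snd (snd w) \<delta>)"

definition o_lim :: "'o::wellorder \<Rightarrow> ('o \<Rightarrow> bool) \<Rightarrow> 'o" where
  "o_lim lm r = (LEAST \<gamma>. \<gamma> < lm \<and> (\<forall>\<delta>. \<gamma> \<le> \<delta> \<and> \<delta> < lm \<longrightarrow> \<not> r \<delta>))"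

(* lambda-par(r): True = even, False = odd *)
definition lam_par :: "'o::wellorder \<Rightarrow> ('o \<Rightarrow> bool) \<Rightarrow> bool" where
  "lam_par lm r = ord_even (o_lim lm r)"

definition P_set :: "player \<Rightarrow> ('o::wellorder) world \<Rightarrow> 'o world set" where
  "P_set i w = {v \<in> W_kappa. recd i v = recd i w \<and>
     (recd i w ozero \<longrightarrow> coin_of v = coin_of w) \<and>
     (\<forall>\<beta>. recd i w (osucc \<beta>) \<longrightarrow> recd (other i) v \<beta> = recd (other i) w \<beta>) \<and>
     (\<forall>lm. is_limit lm \<and> recd i w lm \<longrightarrow>
          lam_par lm (recd (other i) v) = lam_par lm (recd (other i) w))}"

definition fa_prob :: "'a set \<Rightarrow> ('a set \<Rightarrow> real) \<Rightarrow> bool" where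
  "fa_prob W \<mu> \<longleftrightarrow> (\<forall>E\<subseteq>W. 0 \<le> \<mu> E) \<and> \<mu> W = 1 \<and>
     (\<forall>E F. E \<subseteq> W \<and> F \<subseteq> W \<and> E \<inter> F = {} \<longrightarrow> \<mu> (E \<union> F) = \<mu> E + \<mu> F)"

definition half_or_one :: "bool \<Rightarrow> real" where
  "half_or_one b = (if b then 1 else 1/2)"

(* the *-type space <W^kappa, (T_i), theta>, theta(w) = w_0 *)
definition star_type_space :: "(player \<Rightarrow> ('o::wellorder) world \<Rightarrow> 'o world set \<Rightarrow> real) \<Rightarrow> bool" where
  "star_type_space Ty \<longleftrightarrow> (\<forall>i. \<forall>w\<in>W_kappa.
     fa_prob W_kappa (Ty i w) \<and>
     (\<forall>v\<in>P_set i w. Ty i v = Ty i w) \<and>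
     Ty i w (P_set i w) = 1 \<and>
     Ty i w {u\<in>W_kappa. coin_of u = coin_of w} = half_or_one (recd i w ozero) \<and>
     (\<forall>\<beta>. Ty i w {u\<in>W_kappa. recd (other i) u \<beta> = recd (other i) w \<beta>}
            = half_or_one (recd i w (osucc \<beta>))) \<and>
     (\<forall>lm. is_limit lm \<longrightarrow>
        Ty i w {u\<in>W_kappa. lam_par lm (recd (other i) u) = lam_par lm (recd (other i) w)}
            = half_or_one (recd i w lm)) \<and>
     (\<forall>\<beta> \<alpha> E u. \<beta> < \<alpha> \<and> E \<subseteq> W_upto \<beta> \<and> u \<in> W_kappa \<and> restr \<alpha> u = restr \<alpha> w \<longrightarrow>
        Ty i u {x\<in>W_kappa. restr \<beta> x \<in> E} = Ty i w {x\<in>W_kappa. restr \<beta> x \<in> E}))"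

definition B1 :: "(player \<Rightarrow> ('o::wellorder) world \<Rightarrow> 'o world set \<Rightarrow> real) \<Rightarrow> player \<Rightarrow> 'o world set \<Rightarrow> 'o world set" where
  "B1 Ty i E = {w\<in>W_kappa. Ty i w E \<ge> 1}"

end

theory Submission
  imports Defs
begin

text \<open>Player i's belief in the event that a world agrees with w on the coordinate governed
  by a bit of w_i is 1 if the bit is set and 1/2 otherwise. Since the event and its complement
  have total probability 1, belief 1/2 in one forces belief 1/2 in the other, so the bit is set
  exactly when player i is certain of one of the two values of that coordinate.\<close>

lemma fa_prob_compl:
  assumes "fa_prob W \<mu>"
  shows "\<mu> {u\<in>W. Q u} + \<mu> {u\<in>W. \<not> Q u} = 1"
proof -
  have "\<mu> ({u\<in>W. Q u} \<union> {u\<in>W. \<not> Q u}) = \<mu> {u\<in>W. Q u} + \<mu> {u\<in>W. \<not> Q u}"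
    using assms unfolding fa_prob_def by (metis (no_types, lifting) Int_emptyI mem_Collect_eq subsetI)
  moreover have "{u\<in>W. Q u} \<union> {u\<in>W. \<not> Q u} = W" by auto
  ultimately show ?thesis using assms unfolding fa_prob_def by simp
qed

lemma half_or_one_iff_certain:
  assumes "fa_prob W \<mu>"
    and "\<mu> {u\<in>W. Q u = Q w} = half_or_one b"
  shows "b \<longleftrightarrow> 1 \<le> \<mu> {u\<in>W. Q u} \<or> 1 \<le> \<mu> {u\<in>W. \<not> Q u}"
proof -
  have "{u\<in>W. Q u = Q w} = (if Q w then {u\<in>W. Q u} else {u\<in>W. \<not> Q u})" by auto
  with assms fa_prob_compl[OF assms(1), of Q] show ?thesis
    by (auto simp: half_or_one_def split: if_splits)
qed

lemma B1_union_compl_eq: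
  assumes "\<And>w. w \<in> W_kappa \<Longrightarrow> fa_prob W_kappa (Ty i w)"
    and "\<And>w. w \<in> W_kappa \<Longrightarrow> Ty i w {u\<in>W_kappa. Q u = Q w} = half_or_one (b w)"
  shows "{w\<in>W_kappa. b w} = B1 Ty i {u\<in>W_kappa. Q u} \<union> B1 Ty i {u\<in>W_kappa. \<not> Q u}"
  using half_or_one_iff_certain[OF assms] by (auto simp: B1_def)

lemma star_type_spaceD:
  assumes "star_type_space Ty" "w \<in> W_kappa"
  shows "fa_prob W_kappa (Ty i w)"
    and "Ty i w {u\<in>W_kappa. coin_of u = coin_of w} = half_or_one (recd i w ozero)"
    and "Ty i w {u\<in>W_kappa. recd (other i) u \<beta> = recd (other i) w \<beta>}
           = half_or_one (recd i w (osucc \<beta>))"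
    and "is_limit lm \<Longrightarrow>
         Ty i w {u\<in>W_kappa. lam_par lm (recd (other i) u) = lam_par lm (recd (other i) w)}
           = half_or_one (recd i w lm)"
  using assms unfolding star_type_space_def by blast+

lemma coin_eq_iff_eq_H: "(a = b) \<longleftrightarrow> ((a = H) \<longleftrightarrow> (b = H))"
  by (cases a; cases b) auto

lemma coin_eq_T_iff: "(c = T) \<longleftrightarrow> c \<noteq> H"
  by (cases c) auto

theorem lemma8:
  fixes Ty :: "player \<Rightarrow> ('o::wellorder) world \<Rightarrow> 'o world set \<Rightarrow> real"
  assumes kappa_card: "Cinfinite (ord_rel :: 'o rel)"
    and kappa_regular: "regularCard (ord_rel :: 'o rel)"
    and tsp: "star_type_space Ty"
  shows
    "({w\<in>W_kappa. recd i w ozero} =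
       B1 Ty i {u\<in>W_kappa. coin_of u = H} \<union> B1 Ty i {u\<in>W_kappa. coin_of u = T}) \<and>
     (\<forall>\<beta>::'o. {w\<in>W_kappa. recd i w (osucc \<beta>)} =
       B1 Ty i {u\<in>W_kappa. recd (other i) u \<beta>} \<union> B1 Ty i {u\<in>W_kappa. \<not> recd (other i) u \<beta>}) \<and>
     (\<forall>lm::'o. is_limit lm \<longrightarrow> {w\<in>W_kappa. recd i w lm} =
       B1 Ty i {u\<in>W_kappa. lam_par lm (recd (other i) u)} \<union>
       B1 Ty i {u\<in>W_kappa. \<not> lam_par lm (recd (other i) u)})"
proof (intro conjI allI impI)
  note fa = star_type_spaceD(1)[OF tsp]
  show "{w\<in>W_kappa. recd i w ozero} =
      B1 Ty i {u\<in>W_kappa. coin_of u = H} \<union> B1 Ty i {u\<in>W_kappa. coin_of u = T}"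
    using B1_union_compl_eq[OF fa, where Q = "\<lambda>u. coin_of u = H" and b = "\<lambda>w. recd i w ozero"]
      star_type_spaceD(2)[OF tsp]
    by (simp add: coin_eq_T_iff flip: coin_eq_iff_eq_H)
  show "{w\<in>W_kappa. recd i w (osucc \<beta>)} =
      B1 Ty i {u\<in>W_kappa. recd (other i) u \<beta>} \<union> B1 Ty i {u\<in>W_kappa. \<not> recd (other i) u \<beta>}"
    for \<beta>
    using B1_union_compl_eq[OF fa star_type_spaceD(3)[OF tsp]] .
  show "{w\<in>W_kappa. recd i w lm} =
      B1 Ty i {u\<in>W_kappa. lam_par lm (recd (other i) u)} \<union>
      B1 Ty i {u\<in>W_kappa. \<not> lam_par lm (recd (other i) u)}"
    if "is_limit lm" for lm
    using B1_union_compl_eq[OF fa star_type_spaceD(4)[OF tsp _ that]] .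
qed

end
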